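(* For any graph $G$, any vertex $v\in V(G)$, any integer $k\ge 2$ and any integer $r\ge 3$, $$R_r(\mathcal{B}(G),k)\le R(\mathcal{G}^*(v),k)+r-2.$$
   Context: For a graph $G$, a hypergraph $H$ is a Berge-$G$ hypergraph if there are an injective map $\phi:V(G)\to V(H)$ and pairwise distinct hyperedges $e_{xy}\in E(H)$, one for each $xy\in E(G)$, with $\phi(x),\phi(y)\in e_{xy}$. $\mathcal{B}(G)$ denotes the family of all Berge-$G$ hypergraphs. $K_n^r$ denotes the complete $r$-uniform hypergraph on $n$ vertices. For a family $\mathcal{H}$ of $r$-uniform hypergraphs and integers $k\ge 2$, $r\ge 2$, $R_r(\mathcal{H},k)$ is the smallest $n$ such that every $k$-coloring of the hyperedges of $K_n^r$ contains a monochromatic subhypergraph belonging to $\mathcal{H}$. For a family $\mathcal{G}$ of graphs, $R(\mathcal{G},k)$ is the smallest $n$ such that every $k$-coloring of the edges of the complete graph $K_n$ contains a monochromatic subgraph isomorphic to some member of $\mathcal{G}$. For a graph $G$ and $v\in V(G)$ with neighborhood $N(v)=\{q_1,\dots,q_t\}$, let $G'=G-v$. An extension of $G-v$ is any graph obtained from $G'$ by adding, for each $i=1,\dots,t$, an edge $q_ir_i$ not belonging to $G'$, where each $r_i$ is either a vertex of $G'$ or a new vertex not in $G'$ (new vertices may be shared by several $r_i$), and the $t$ added edges are pairwise distinct. $\mathcal{G}^*(v)$ denotes the family of all such extensions (it contains $G$ itself). *)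

theory Defs
  imports Main
begin

definition simple_graph :: "'a set \<Rightarrow> 'a set set \<Rightarrow> bool" where
  "simple_graph V E \<longleftrightarrow> finite V \<and> (\<forall>e\<in>E. e \<subseteq> V \<and> card e = 2)"

definition nbhd :: "'a set set \<Rightarrow> 'a \<Rightarrow> 'a set" where
  "nbhd E v = {u. {v, u} \<in> E}"

definition is_berge :: "'a set \<Rightarrow> 'a set set \<Rightarrow> 'b set \<Rightarrow> 'b set set \<Rightarrow> bool" where
  "is_berge V E VH EH \<longleftrightarrow>
     (\<exists>(\<phi> :: 'a \<Rightarrow> 'b) (h :: 'a set \<Rightarrow> 'b set).
        inj_on \<phi> V \<and> \<phi> ` V \<subseteq> VH \<and> inj_on h E \<and> h ` E \<subseteq> EH \<and>
        (\<forall>xy\<in>E. \<phi> ` xy \<subseteq> h xy))"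

text \<open>Extensions of G - v.  Old vertices are tagged Inl, new vertices are Inr j.
  rho q is the vertex r_i joined to the neighbour q = q_i of v.\<close>
definition extension :: "'a set \<Rightarrow> 'a set set \<Rightarrow> 'a \<Rightarrow> ('a + nat) set \<Rightarrow> ('a + nat) set set \<Rightarrow> bool" where
  "extension V E v W F \<longleftrightarrow>
     (\<exists>\<rho> :: 'a \<Rightarrow> 'a + nat.
        (\<forall>q\<in>nbhd E v. \<rho> q \<in> Inl ` (V - {v}) \<union> range Inr) \<and>
        (\<forall>q\<in>nbhd E v. \<rho> q \<noteq> Inl q) \<and>
        (\<forall>q\<in>nbhd E v. {Inl q, \<rho> q} \<notin> (\<lambda>e. Inl ` e) ` {e\<in>E. v \<notin> e}) \<and>
        inj_on (\<lambda>q. {Inl q, \<rho> q}) (nbhd E v) \<and>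
        W = Inl ` (V - {v}) \<union> \<rho> ` nbhd E v \<and>
        F = (\<lambda>e. Inl ` e) ` {e\<in>E. v \<notin> e} \<union> (\<lambda>q. {Inl q, \<rho> q}) ` nbhd E v)"

definition ext_family :: "'a set \<Rightarrow> 'a set set \<Rightarrow> 'a \<Rightarrow> (('a + nat) set \<times> ('a + nat) set set) set" where
  "ext_family V E v = {(W, F). extension V E v W F}"

definition ramsey_graph :: "('b set \<times> 'b set set) set \<Rightarrow> nat \<Rightarrow> nat" where
  "ramsey_graph \<G> k = (LEAST n. \<forall>c :: nat set \<Rightarrow> nat.
      (\<forall>e. e \<subseteq> {..<n} \<and> card e = 2 \<longrightarrow> c e < k) \<longrightarrow>
      (\<exists>(W, F)\<in>\<G>. \<exists>i<k. \<exists>f :: 'b \<Rightarrow> nat.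
          inj_on f W \<and> f ` W \<subseteq> {..<n} \<and> (\<forall>e\<in>F. c (f ` e) = i)))"

definition ramsey_berge :: "nat \<Rightarrow> 'a set \<Rightarrow> 'a set set \<Rightarrow> nat \<Rightarrow> nat" where
  "ramsey_berge r V E k = (LEAST n. \<forall>c :: nat set \<Rightarrow> nat.
      (\<forall>e. e \<subseteq> {..<n} \<and> card e = r \<longrightarrow> c e < k) \<longrightarrow>
      (\<exists>i<k. \<exists>VH EH. VH \<subseteq> {..<n} \<and>
          (\<forall>e\<in>EH. e \<subseteq> VH \<and> card e = r \<and> c e = i) \<and> is_berge V E VH EH))"

end

theory Submission
  imports Defs "HOL-Library.Ramsey"
begin

text \<open>Fix a set S of r - 2 vertices above N and colour each pair e of {..<N} by the colour
  of the r-set e \<union> S.  A monochromatic extension of G - v in this auxiliary colouring yields a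
  Berge copy of G: send v into S, every edge xy of G - v to f xy \<union> S and every edge vq to
  f {q, r_q} \<union> S, which contains the image of v because S does.  Distinct edges of the
  extension give distinct hyperedges.\<close>

definition graph_arrows :: "nat \<Rightarrow> ('b set \<times> 'b set set) set \<Rightarrow> nat \<Rightarrow> bool" where
  "graph_arrows n \<G> k \<longleftrightarrow> (\<forall>c :: nat set \<Rightarrow> nat.
      (\<forall>e. e \<subseteq> {..<n} \<and> card e = 2 \<longrightarrow> c e < k) \<longrightarrow>
      (\<exists>W F i f. (W, F) \<in> \<G> \<and> i < k \<and> inj_on (f :: 'b \<Rightarrow> nat) W \<and>
          f ` W \<subseteq> {..<n} \<and> (\<forall>e\<in>F. c (f ` e) = i)))"

lemma ramsey_graph_eq_Least: "ramsey_graph \<G> k = (LEAST n. graph_arrows n \<G> k)"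
  unfolding ramsey_graph_def graph_arrows_def by (simp add: Bex_def)

definition berge_arrows :: "nat \<Rightarrow> 'a set \<Rightarrow> 'a set set \<Rightarrow> nat \<Rightarrow> nat \<Rightarrow> bool" where
  "berge_arrows r V E n k \<longleftrightarrow> (\<forall>c :: nat set \<Rightarrow> nat.
      (\<forall>e. e \<subseteq> {..<n} \<and> card e = r \<longrightarrow> c e < k) \<longrightarrow>
      (\<exists>i<k. \<exists>VH EH. VH \<subseteq> {..<n} \<and>
          (\<forall>e\<in>EH. e \<subseteq> VH \<and> card e = r \<and> c e = i) \<and> is_berge V E VH EH))"

lemma ramsey_berge_eq_Least: "ramsey_berge r V E k = (LEAST n. berge_arrows r V E n k)"
  by (simp add: ramsey_berge_def berge_arrows_def)

lemma simple_graph_edgeD: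
  assumes "simple_graph V E" "e \<in> E"
  shows "e \<subseteq> V" "card e = 2"
  using assms by (auto simp: simple_graph_def)

lemma extension_is_graph:
  assumes "simple_graph V E" "extension V E v W F"
  shows "finite W" "\<forall>e\<in>F. e \<subseteq> W \<and> card e = 2"
proof -
  obtain \<rho> where \<rho>: "\<forall>q\<in>nbhd E v. \<rho> q \<noteq> Inl q"
    and W: "W = Inl ` (V - {v}) \<union> \<rho> ` nbhd E v"
    and F: "F = (\<lambda>e. Inl ` e) ` {e\<in>E. v \<notin> e} \<union> (\<lambda>q. {Inl q, \<rho> q}) ` nbhd E v"
    using assms(2) unfolding extension_def by blast
  have "finite V" using assms(1) by (simp add: simple_graph_def)
  have nbhd_sub: "nbhd E v \<subseteq> V - {v}"
  proof
    fix q assume "q \<in> nbhd E v"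
    then have "{v, q} \<in> E" by (simp add: nbhd_def)
    then have "{v, q} \<subseteq> V" "card {v, q} = 2" using simple_graph_edgeD[OF assms(1)] by blast+
    then show "q \<in> V - {v}" by (cases "q = v") auto
  qed
  show "finite W" unfolding W using \<open>finite V\<close> finite_subset[OF nbhd_sub] by simp
  show "\<forall>e\<in>F. e \<subseteq> W \<and> card e = 2"
  proof
    fix e assume "e \<in> F"
    then consider e' where "e' \<in> E" "v \<notin> e'" "e = Inl ` e'" | q where "q \<in> nbhd E v" "e = {Inl q, \<rho> q}"
      unfolding F by blast
    then show "e \<subseteq> W \<and> card e = 2"
    proof cases
      case 1
      then show ?thesis using simple_graph_edgeD[OF assms(1) \<open>e' \<in> E\<close>]
        by (auto simp: W card_image)
    next
      case 2
      then show ?thesis using \<rho> nbhd_sub by (auto simp: W)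
    qed
  qed
qed

lemma extension_exists:
  obtains W F where "extension V E v W F"
proof
  show "extension V E v (Inl ` (V - {v}) \<union> (\<lambda>q. Inr 0) ` nbhd E v)
     ((\<lambda>e. Inl ` e) ` {e\<in>E. v \<notin> e} \<union> (\<lambda>q. {Inl q, Inr 0}) ` nbhd E v)"
    unfolding extension_def
    by (auto intro!: exI[of _ "\<lambda>q. Inr 0"] simp: inj_on_def doubleton_eq_iff)
qed

lemma extension_embeds_edges:
  assumes "simple_graph V E" "extension V E v W F"
  obtains g where "inj_on g E" "g ` E \<subseteq> F" "\<And>xy. xy \<in> E \<Longrightarrow> Inl ` (xy - {v}) \<subseteq> g xy"
proof -
  obtain \<rho> where
    new: "\<forall>q\<in>nbhd E v. {Inl q, \<rho> q} \<notin> (\<lambda>e. Inl ` e) ` {e\<in>E. v \<notin> e}" and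
    inj: "inj_on (\<lambda>q. {Inl q, \<rho> q}) (nbhd E v)" and
    F: "F = (\<lambda>e. Inl ` e) ` {e\<in>E. v \<notin> e} \<union> (\<lambda>q. {Inl q, \<rho> q}) ` nbhd E v"
    using assms(2) unfolding extension_def by blast
  define g where
    "g xy = (if v \<in> xy then {Inl (the_elem (xy - {v})), \<rho> (the_elem (xy - {v}))} else Inl ` xy)"
    for xy
  have at_v: "\<exists>q. q \<in> nbhd E v \<and> xy = {v, q} \<and> g xy = {Inl q, \<rho> q}"
    if "xy \<in> E" "v \<in> xy" for xy
  proof -
    obtain a b where "xy = {a, b}" "a \<noteq> b"
      using simple_graph_edgeD(2)[OF assms(1) \<open>xy \<in> E\<close>] card_2_iff by metis
    then obtain q where q: "xy = {v, q}" "q \<noteq> v" using \<open>v \<in> xy\<close> by auto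
    then have "xy - {v} = {q}" by auto
    then show ?thesis using q that by (auto simp: g_def nbhd_def)
  qed
  have off_v: "g xy = Inl ` xy" if "v \<notin> xy" for xy
    using that by (simp add: g_def)
  have at_v_neq_off_v: "g x \<noteq> g y" if x: "x \<in> E" "v \<in> x" and y: "y \<in> E" "v \<notin> y" for x y
  proof -
    obtain p where "p \<in> nbhd E v" "g x = {Inl p, \<rho> p}" using at_v[OF x] by blast
    moreover have "g y \<in> (\<lambda>e. Inl ` e) ` {e\<in>E. v \<notin> e}" using off_v y by blast
    ultimately show ?thesis using new by auto
  qed
  have "inj_on g E"
  proof (rule inj_onI)
    fix x y assume x: "x \<in> E" and y: "y \<in> E" and eq: "g x = g y"
    show "x = y"
    proof (cases "v \<in> x"; cases "v \<in> y")
      assume "v \<in> x" "v \<in> y"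
      then obtain p q where "p \<in> nbhd E v" "x = {v, p}" "g x = {Inl p, \<rho> p}"
        and "q \<in> nbhd E v" "y = {v, q}" "g y = {Inl q, \<rho> q}"
        using at_v[OF x] at_v[OF y] by blast
      then show ?thesis using inj_onD[OF inj] eq by auto
    next
      assume "v \<in> x" "v \<notin> y"
      then show ?thesis using at_v_neq_off_v[of x y] x y eq by blast
    next
      assume "v \<notin> x" "v \<in> y"
      then show ?thesis using at_v_neq_off_v[of y x] x y eq by auto
    next
      assume "v \<notin> x" "v \<notin> y"
      then show ?thesis using off_v eq by (simp add: inj_image_eq_iff)
    qed
  qed
  moreover have "g xy \<in> F" if "xy \<in> E" for xy
    using at_v[OF that] off_v[of xy] that by (cases "v \<in> xy") (auto simp: F)
  moreover have "Inl ` (xy - {v}) \<subseteq> g xy" if "xy \<in> E" for xy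
    using at_v[OF that] off_v[of xy] by (cases "v \<in> xy") auto
  ultimately show thesis using that by blast
qed

lemma graph_arrows_finite_graph:
  assumes "finite W" "\<forall>e\<in>F. e \<subseteq> W \<and> card e = 2" "(W, F) \<in> \<G>"
  shows "\<exists>n. graph_arrows n \<G> k"
proof -
  obtain n :: nat where n: "partn_lst {..<n} (replicate k (card W)) 2"
    using ramsey_full by blast
  have "graph_arrows n \<G> k"
    unfolding graph_arrows_def
  proof (intro allI impI)
    fix c :: "nat set \<Rightarrow> nat"
    assume "\<forall>e. e \<subseteq> {..<n} \<and> card e = 2 \<longrightarrow> c e < k"
    then have "c \<in> nsets {..<n} 2 \<rightarrow> {..<k}" by (auto simp: nsets_def)
    then obtain i H where "i < k" and H: "H \<in> nsets {..<n} (card W)" and mono: "c ` nsets H 2 \<subseteq> {i}"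
      using partn_lstE[OF n] by (metis length_replicate nth_replicate)
    then have "finite H" "card H = card W" "H \<subseteq> {..<n}" by (auto simp: nsets_def)
    then obtain f where f: "bij_betw f W H"
      using assms(1) finite_same_card_bij by metis
    have "c (f ` e) = i" if "e \<in> F" for e
    proof -
      have "e \<subseteq> W" "card e = 2" using assms(2) that by auto
      moreover have "finite e" using \<open>card e = 2\<close> card.infinite by fastforce
      ultimately have "f ` e \<in> nsets H 2"
        using f by (auto simp: nsets_def bij_betw_def card_image inj_on_subset)
      then show ?thesis using mono by auto
    qed
    then show "\<exists>W F i f. (W, F) \<in> \<G> \<and> i < k \<and> inj_on f W \<and>
        f ` W \<subseteq> {..<n} \<and> (\<forall>e\<in>F. c (f ` e) = i)"
      using assms(3) \<open>i < k\<close> f \<open>H \<subseteq> {..<n}\<close>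
      by (intro exI[of _ W] exI[of _ F] exI[of _ i] exI[of _ f]) (auto simp: bij_betw_def)
  qed
  then show ?thesis ..
qed

lemma graph_arrows_ramsey_graph:
  assumes "simple_graph V E"
  shows "graph_arrows (ramsey_graph (ext_family V E v) k) (ext_family V E v) k"
proof -
  obtain W F where "extension V E v W F" by (rule extension_exists)
  then have "\<exists>n. graph_arrows n (ext_family V E v) k"
    using extension_is_graph[OF assms]
    by (intro graph_arrows_finite_graph[of W F]) (auto simp: ext_family_def)
  then show ?thesis unfolding ramsey_graph_eq_Least by (rule LeastI_ex)
qed

lemma is_berge_padded_extension:
  fixes f :: "'a + nat \<Rightarrow> nat"
  assumes "simple_graph V E" "extension V E v W F"
    and "inj_on f W" "f ` W \<subseteq> {..<N}" "N \<in> S" "S \<inter> {..<N} = {}"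
  shows "is_berge V E ({..<N} \<union> S) ((\<lambda>e. f ` e \<union> S) ` F)"
proof -
  obtain g where g: "inj_on g E" "g ` E \<subseteq> F" "\<And>xy. xy \<in> E \<Longrightarrow> Inl ` (xy - {v}) \<subseteq> g xy"
    using extension_embeds_edges[OF assms(1,2)] by blast
  have F_sub: "e \<subseteq> W" if "e \<in> F" for e
    using extension_is_graph(2)[OF assms(1,2)] that by blast
  have W: "Inl ` (V - {v}) \<subseteq> W" using assms(2) by (auto simp: extension_def)
  define \<phi> where "\<phi> x = (if x = v then N else f (Inl x))" for x
  have "inj_on \<phi> V"
  proof (rule inj_onI)
    fix x y assume x: "x \<in> V" and y: "y \<in> V" and eq: "\<phi> x = \<phi> y"
    have "\<phi> z < N \<longleftrightarrow> z \<noteq> v" if "z \<in> V" for z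
      using W assms(4) that by (auto simp: \<phi>_def)
    then have "x = v \<longleftrightarrow> y = v" using x y eq by metis
    moreover have "Inl x = Inl y" if "x \<noteq> v" "y \<noteq> v"
      using inj_onD[OF assms(3)] W x y eq that by (auto simp: \<phi>_def)
    ultimately show "x = y" by auto
  qed
  moreover have "\<phi> ` V \<subseteq> {..<N} \<union> S"
    using assms(4,5) W by (auto simp: \<phi>_def)
  moreover have "inj_on (\<lambda>e. f ` e \<union> S) F"
  proof (rule inj_onI)
    fix e e' assume "e \<in> F" "e' \<in> F" and eq: "f ` e \<union> S = f ` e' \<union> S"
    moreover have "f ` e \<subseteq> {..<N}" "f ` e' \<subseteq> {..<N}"
      using F_sub[OF \<open>e \<in> F\<close>] F_sub[OF \<open>e' \<in> F\<close>] assms(4) by auto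
    ultimately have "f ` e = f ` e'" using assms(6) by blast
    then show "e = e'"
      using F_sub[OF \<open>e \<in> F\<close>] F_sub[OF \<open>e' \<in> F\<close>] assms(3) by (simp add: inj_on_image_eq_iff)
  qed
  then have "inj_on ((\<lambda>e. f ` e \<union> S) \<circ> g) E"
    using g(1,2) by (simp add: comp_inj_on inj_on_subset)
  moreover have "\<phi> ` xy \<subseteq> ((\<lambda>e. f ` e \<union> S) \<circ> g) xy" if "xy \<in> E" for xy
    using g(3)[OF that] assms(5) by (auto simp: \<phi>_def)
  moreover have "((\<lambda>e. f ` e \<union> S) \<circ> g) ` E \<subseteq> (\<lambda>e. f ` e \<union> S) ` F"
    using g(2) by (auto simp: image_comp[symmetric])
  ultimately show ?thesis
    unfolding is_berge_def by blast
qed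

lemma card_padded_pair:
  assumes "e \<subseteq> {..<N}" "card e = 2" "r \<ge> 2"
  shows "card (e \<union> {N..<N + r - 2}) = r" "e \<union> {N..<N + r - 2} \<subseteq> {..<N + r - 2}"
proof -
  have "finite e" using assms(2) card.infinite by fastforce
  moreover have "e \<inter> {N..<N + r - 2} = {}" using assms(1) by auto
  ultimately show "card (e \<union> {N..<N + r - 2}) = r" using assms by (simp add: card_Un_disjoint)
  show "e \<union> {N..<N + r - 2} \<subseteq> {..<N + r - 2}" using assms by auto
qed

lemma berge_arrows_if_graph_arrows:
  assumes "simple_graph V E" "r \<ge> 3" "graph_arrows N (ext_family V E v) k"
  shows "berge_arrows r V E (N + r - 2) k"
  unfolding berge_arrows_def
proof (intro allI impI)
  fix c :: "nat set \<Rightarrow> nat"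
  assume c: "\<forall>e. e \<subseteq> {..<N + r - 2} \<and> card e = r \<longrightarrow> c e < k"
  define S where "S = {N..<N + r - 2}"
  have "\<forall>e. e \<subseteq> {..<N} \<and> card e = 2 \<longrightarrow> c (e \<union> S) < k"
  proof (intro allI impI)
    fix e assume "e \<subseteq> {..<N} \<and> card e = 2"
    then show "c (e \<union> S) < k"
      using c card_padded_pair[of e N r] assms(2) unfolding S_def by auto
  qed
  then obtain W F i f where "(W, F) \<in> ext_family V E v" and "i < k"
    and f: "inj_on f W" "f ` W \<subseteq> {..<N}" and mono: "\<forall>e\<in>F. c (f ` e \<union> S) = i"
    using assms(3)[unfolded graph_arrows_def, THEN spec[of _ "\<lambda>e. c (e \<union> S)"]] by blast
  then have ext: "extension V E v W F" by (simp add: ext_family_def)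
  have hyperedges: "f ` e \<union> S \<subseteq> {..<N + r - 2} \<and> card (f ` e \<union> S) = r" if "e \<in> F" for e
  proof -
    have "e \<subseteq> W" "card e = 2" using extension_is_graph(2)[OF assms(1) ext] that by auto
    moreover have "inj_on f e" using f(1) \<open>e \<subseteq> W\<close> by (rule inj_on_subset)
    ultimately have "f ` e \<subseteq> {..<N}" "card (f ` e) = 2"
      using f(2) by (auto simp: card_image)
    then show ?thesis unfolding S_def using assms(2) by (intro conjI card_padded_pair) auto
  qed
  have "N \<in> S" "S \<inter> {..<N} = {}" using assms(2) by (auto simp: S_def)
  then have "is_berge V E ({..<N} \<union> S) ((\<lambda>e. f ` e \<union> S) ` F)"
    by (rule is_berge_padded_extension[OF assms(1) ext f])
  moreover have "{..<N} \<union> S = {..<N + r - 2}" using assms(2) by (auto simp: S_def)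
  ultimately show "\<exists>i<k. \<exists>VH EH. VH \<subseteq> {..<N + r - 2} \<and>
      (\<forall>e\<in>EH. e \<subseteq> VH \<and> card e = r \<and> c e = i) \<and> is_berge V E VH EH"
    using \<open>i < k\<close> mono hyperedges
    by (intro exI[of _ i] conjI exI[of _ "{..<N + r - 2}"] conjI exI[of _ "(\<lambda>e. f ` e \<union> S) ` F"])
      auto
qed

theorem theorem2:
  fixes V :: "'a set" and E :: "'a set set" and v :: 'a and k r :: nat
  assumes "simple_graph V E" and "v \<in> V" and "k \<ge> 2" and "r \<ge> 3"
  shows "ramsey_berge r V E k \<le> ramsey_graph (ext_family V E v) k + r - 2"
proof -
  have "graph_arrows (ramsey_graph (ext_family V E v) k) (ext_family V E v) k"
    using graph_arrows_ramsey_graph[OF assms(1)] .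
  then have "berge_arrows r V E (ramsey_graph (ext_family V E v) k + r - 2) k"
    by (rule berge_arrows_if_graph_arrows[OF assms(1,4)])
  then show ?thesis unfolding ramsey_berge_eq_Least by (rule Least_le)
qed

end
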